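(* Let $\nabla$ be a compatible connection on $\mathfrak{H}_n^\infty$, with $\nabla_k=D_k+\pi(h_k)$ for skew-adjoint $h_k\in\mathbb{M}_n(\mathcal{A}_\theta^\infty)$, and let $H=-\sum_k(D_k+\pi(h_k))^2$ with domain $\mathcal{D}(\Delta)$. If $\xi\in\mathcal{D}(H)$ satisfies $H\xi=\lambda\xi$ for some $\lambda$, then $\xi\in\mathcal{D}^\infty(\Delta):=\bigcap_{m\ge1}\mathcal{D}(\Delta^m)$.
   Context: $\theta$ is a real antisymmetric $N\times N$ matrix; $\mathcal{A}_\theta$ is the universal $C^*$-algebra generated by unitaries $u_1,\dots,u_N$ with $u_ku_l=\exp(2\pi i\theta_{kl})u_lu_k$; $\mathcal{A}_\theta^\infty$ is its smooth part for the torus action $\sigma_z(u^\alpha)=z^\alpha u^\alpha$, with derivations $\delta_ku_l=i\delta_{kl}u_l$ acting entrywise on matrices as $\delta_k^{(n)}$. $\mathfrak{H}_n=L^2(\mathcal{A}_\theta\otimes\mathbb{M}_n(\mathbb{C}),\tau\otimes\mathrm{tr})\cong L^2(\mathbb{T}^N)\otimes\mathbb{M}_n(\mathbb{C})$; $\eta$ canonical embedding, $\mathfrak{H}_n^\infty=\eta(\mathbb{M}_n(\mathcal{A}_\theta^\infty))$, $D_k$ the partial derivatives ($D_k\eta(x)=\eta(\delta_k^{(n)}x)$) on their usual domains, $\pi(a)\eta(x)=\eta(ax)$. $\Delta=-\sum_kD_k^2$ with $\mathcal{D}(\Delta)=\operatorname{span}\{\eta(\sum_\alpha c_\alpha u^\alpha\otimes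 m):(\|\alpha\|_2^2c_\alpha)_\alpha\in\ell^2(\mathbb{Z}^N)\}$. A compatible connection on $\mathfrak{H}_n^\infty$ is an $N$-tuple of linear maps $\nabla_k$ with $\nabla_k(\xi a)=(\nabla_k\xi)a+\xi\delta_k^{(n)}(a)$ and $(\nabla_kx)^*y+x^*\nabla_ky=\delta_k^{(n)}(x^*y)$. *)

theory Defs
  imports "HOL-Analysis.Analysis" "HOL-Library.Function_Algebras"
begin

text \<open>An element of
  \<open>L^2(A_theta \<otimes> M_n(C))\<close> is represented by its coefficient function
  \<open>\<alpha> \<mapsto> c_\<alpha>\<close> on \<open>Z^N\<close> (here \<open>'i \<Rightarrow> int\<close>, with \<open>'i\<close> a finite linearly
  ordered index type of size N), valued in n x n complex matrices
  (\<open>complex^'m^'m\<close>, whose norm is the Hilbert-Schmidt norm), meaning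
  \<open>\<Sum>\<^sub>\<alpha> c_\<alpha> \<otimes> u^\<alpha>\<close> with \<open>u^\<alpha> = u_1^{\<alpha>_1} \<dots> u_N^{\<alpha>_N}\<close>.\<close>

type_synonym ('i,'m) coeff = "('i \<Rightarrow> int) \<Rightarrow> complex^'m^'m"

definition sqn :: "('i::finite \<Rightarrow> int) \<Rightarrow> real" where
  "sqn \<alpha> = (\<Sum>k\<in>UNIV. (real_of_int (\<alpha> k))^2)"

text \<open>\<open>u^\<beta> u^\<gamma> = phase \<theta> \<beta> \<gamma> \<cdot> u^(\<beta>+\<gamma>)\<close>.\<close>
definition phase :: "('i::{finite,linorder} \<Rightarrow> 'i \<Rightarrow> real) \<Rightarrow> ('i \<Rightarrow> int) \<Rightarrow> ('i \<Rightarrow> int) \<Rightarrow> complex" where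
  "phase \<theta> \<beta> \<gamma> = exp (2 * complex_of_real pi * \<i> *
      complex_of_real (\<Sum>k\<in>UNIV. \<Sum>l\<in>{l. l < k}. \<theta> k l * real_of_int (\<beta> k) * real_of_int (\<gamma> l)))"

definition cmul :: "complex \<Rightarrow> complex^'m^'m \<Rightarrow> complex^'m^'m" where
  "cmul c A = (\<chi> i j. c * A$i$j)"

definition madj :: "complex^'m^'m \<Rightarrow> complex^'m^'m" where
  "madj A = (\<chi> i j. cnj (A$j$i))"

text \<open>Product in \<open>M_n(A_theta)\<close> (and its extension to \<open>\<pi>(a)\<xi>\<close>, \<open>\<xi> a\<close>).\<close>
definition tw :: "('i::{finite,linorder} \<Rightarrow> 'i \<Rightarrow> real) \<Rightarrow> ('i,'m::finite) coeff \<Rightarrow> ('i,'m) coeff \<Rightarrow> ('i,'m) coeff" where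
  "tw \<theta> a b = (\<lambda>\<alpha>. \<Sum>\<^sub>\<infinity>\<beta>. cmul (phase \<theta> \<beta> (\<alpha> - \<beta>)) (a \<beta> ** b (\<alpha> - \<beta>)))"

text \<open>Involution: \<open>(u^\<alpha>)^* = phase \<theta> \<alpha> \<alpha> \<cdot> u^(-\<alpha>)\<close>.\<close>
definition star :: "('i::{finite,linorder} \<Rightarrow> 'i \<Rightarrow> real) \<Rightarrow> ('i,'m::finite) coeff \<Rightarrow> ('i,'m) coeff" where
  "star \<theta> a = (\<lambda>\<beta>. cmul (phase \<theta> \<beta> \<beta>) (madj (a (- \<beta>))))"

text \<open>Partial derivatives \<open>D_k\<close> / derivations \<open>\<delta>_k^{(n)}\<close>: \<open>\<delta>_k u^\<alpha> = i \<alpha>_k u^\<alpha>\<close>.\<close>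
definition Dk :: "'i \<Rightarrow> ('i,'m::finite) coeff \<Rightarrow> ('i,'m) coeff" where
  "Dk k \<xi> = (\<lambda>\<alpha>. cmul (\<i> * of_int (\<alpha> k)) (\<xi> \<alpha>))"

definition ell2 :: "('i,'m::finite) coeff \<Rightarrow> bool" where
  "ell2 \<xi> \<longleftrightarrow> (\<lambda>\<alpha>. (norm (\<xi> \<alpha>))^2) summable_on UNIV"

text \<open>Smooth elements (for the torus action) = rapidly decaying coefficients.\<close>
definition smooth :: "('i::finite,'m::finite) coeff \<Rightarrow> bool" where
  "smooth a \<longleftrightarrow> (\<forall>p::nat. \<exists>C. \<forall>\<alpha>. (1 + sqn \<alpha>)^p * norm (a \<alpha>) \<le> C)"

definition Delta :: "('i::finite,'m::finite) coeff \<Rightarrow> ('i,'m) coeff" where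
  "Delta \<xi> = (\<lambda>\<alpha>. sqn \<alpha> *\<^sub>R \<xi> \<alpha>)"

definition dom_Delta :: "('i::finite,'m::finite) coeff \<Rightarrow> bool" where
  "dom_Delta \<xi> \<longleftrightarrow> ell2 \<xi> \<and> ell2 (Delta \<xi>)"

fun dom_Delta_pow :: "nat \<Rightarrow> ('i::finite,'m::finite) coeff \<Rightarrow> bool" where
  "dom_Delta_pow 0 \<xi> = ell2 \<xi>"
| "dom_Delta_pow (Suc m) \<xi> = (dom_Delta \<xi> \<and> dom_Delta_pow m (Delta \<xi>))"

definition compatible_connection ::
  "('i::{finite,linorder} \<Rightarrow> 'i \<Rightarrow> real) \<Rightarrow> ('i \<Rightarrow> ('i,'m::finite) coeff \<Rightarrow> ('i,'m) coeff) \<Rightarrow> bool" where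
  "compatible_connection \<theta> nabla \<longleftrightarrow>
    (\<forall>k x y a (c::complex).
       smooth x \<and> smooth y \<and> smooth a \<longrightarrow>
         smooth (nabla k x)
       \<and> nabla k (x + y) = nabla k x + nabla k y
       \<and> nabla k (\<lambda>\<alpha>. cmul c (x \<alpha>)) = (\<lambda>\<alpha>. cmul c (nabla k x \<alpha>))
       \<and> nabla k (tw \<theta> x a) = tw \<theta> (nabla k x) a + tw \<theta> x (Dk k a)
       \<and> tw \<theta> (star \<theta> (nabla k x)) y + tw \<theta> (star \<theta> x) (nabla k y) = Dk k (tw \<theta> (star \<theta> x) y))"

definition conn :: "('i::{finite,linorder} \<Rightarrow> 'i \<Rightarrow> real) \<Rightarrow> ('i \<Rightarrow> ('i,'m::finite) coeff) \<Rightarrow> 'i \<Rightarrow> ('i,'m) coeff \<Rightarrow> ('i,'m) coeff" where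
  "conn \<theta> h k \<xi> = Dk k \<xi> + tw \<theta> (h k) \<xi>"

definition Hop :: "('i::{finite,linorder} \<Rightarrow> 'i \<Rightarrow> real) \<Rightarrow> ('i \<Rightarrow> ('i,'m::finite) coeff) \<Rightarrow> ('i,'m) coeff \<Rightarrow> ('i,'m) coeff" where
  "Hop \<theta> h \<xi> = - (\<Sum>k\<in>UNIV. conn \<theta> h k (conn \<theta> h k \<xi>))"

end

theory Submission
  imports Defs
begin

text \<open>On the Fourier side, \<open>\<xi>\<close> lies in the domain of \<open>\<Delta>\<^sup>m\<close> iff it lies in the weighted
  \<open>\<ell>\<^sup>2\<close> space \<open>H\<^sup>2\<^sup>m\<close>, where \<open>H\<^sup>q\<close> (\<open>sobolev q\<close> below) carries the weight \<open>(1 + \<parallel>\<alpha>\<parallel>\<^sup>2)\<^sup>q\<close>.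
  The derivations \<open>D\<^sub>k\<close> map \<open>H\<^sup>q\<^sup>+\<^sup>1\<close> to \<open>H\<^sup>q\<close>, and multiplication by a smooth (rapidly
  decaying) element preserves every \<open>H\<^sup>q\<close>: by Peetre's inequality the weight is
  submultiplicative up to a constant, and Young's inequality \<open>\<ell>\<^sup>1 * \<ell>\<^sup>2 \<subseteq> \<ell>\<^sup>2\<close> does the rest.
  Expanding \<open>H = -\<Sum>\<^sub>k (D\<^sub>k + \<pi>(h\<^sub>k))\<^sup>2\<close> shows that \<open>\<Delta> - H\<close> is of first order, so for an
  eigenvector \<open>\<xi> \<in> H\<^sup>q\<^sup>+\<^sup>1\<close> we get \<open>\<Delta>\<xi> = \<lambda>\<xi> + (\<Delta> - H)\<xi> \<in> H\<^sup>q\<close>, i.e. \<open>\<xi> \<in> H\<^sup>q\<^sup>+\<^sup>2\<close>.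
  Starting from \<open>\<xi> \<in> dom \<Delta> = H\<^sup>2\<close> this bootstraps to all \<open>H\<^sup>q\<close>.\<close>

lemma sum_fun_apply: "(sum f A) x = (\<Sum>k\<in>A. f k x)"
  by (induction A rule: infinite_finite_induct) auto

lemma cmul_add: "cmul c (x + y) = cmul c x + cmul c y"
  by (simp add: cmul_def vec_eq_iff algebra_simps)

lemma cmul_cmul: "cmul c (cmul d x) = cmul (c * d) x"
  by (simp add: cmul_def vec_eq_iff mult.assoc)

lemma sum_cmul: "(\<Sum>k\<in>S. cmul (c k) x) = cmul (\<Sum>k\<in>S. c k) x"
  by (induction S rule: infinite_finite_induct) (auto simp: cmul_def vec_eq_iff algebra_simps)

lemma cmul_of_real: "cmul (complex_of_real r) x = r *\<^sub>R x"
  by (simp add: cmul_def vec_eq_iff) (simp add: scaleR_conv_of_real)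

lemma cmul_uminus: "cmul (- c) x = - cmul c x"
  by (simp add: cmul_def vec_eq_iff)

lemma norm_vec_le_sum_norm:
  "norm (x :: 'a::real_normed_vector ^ 'n::finite) \<le> (\<Sum>i\<in>UNIV. norm (x $ i))"
  unfolding norm_vec_def by (rule L2_set_le_sum) auto

lemma norm_cmul: "norm (cmul c A) = norm c * norm (A::complex^'m::finite^'m)"
proof -
  have row: "norm (\<chi> j. c * (A$i$j)) = norm c * norm (A$i)" for i
    unfolding norm_vec_def by (simp add: L2_set_right_distrib norm_mult)
  show ?thesis
    unfolding cmul_def norm_vec_def[of "\<chi> i j. c * A$i$j"] using row
    by (simp add: L2_set_right_distrib norm_vec_def)
qed

lemma norm_matrix_mult_le:
  fixes A B :: "complex^'m::finite^'m"
  shows "norm (A ** B) \<le> of_nat CARD('m)^3 * (norm A * norm B)"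
proof -
  have entry: "norm ((A ** B)$i$j) \<le> of_nat CARD('m) * (norm A * norm B)" for i j
  proof -
    have "norm ((A ** B)$i$j) \<le> (\<Sum>k\<in>UNIV. norm (A$i$k) * norm (B$k$j))"
      unfolding matrix_matrix_mult_def by (auto intro: order_trans[OF norm_sum] simp: norm_mult)
    also have "\<dots> \<le> (\<Sum>k\<in>(UNIV::'m set). norm A * norm B)"
      by (intro sum_mono mult_mono)
      (auto intro: order_trans[OF Finite_Cartesian_Product.norm_nth_le Finite_Cartesian_Product.norm_nth_le])
    finally show ?thesis by simp
  qed
  have "norm (A ** B) \<le> (\<Sum>i\<in>UNIV. \<Sum>j\<in>UNIV. norm ((A ** B)$i$j))"
    by (intro order_trans[OF norm_vec_le_sum_norm] sum_mono norm_vec_le_sum_norm)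
  also have "\<dots> \<le> (\<Sum>i\<in>(UNIV::'m set). \<Sum>j\<in>(UNIV::'m set). of_nat CARD('m) * (norm A * norm B))"
    by (intro sum_mono entry)
  finally show ?thesis by (simp add: power3_eq_cube)
qed

lemma norm_phase: "norm (phase \<theta> \<beta> \<gamma>) = 1"
proof -
  have "phase \<theta> \<beta> \<gamma> = exp (\<i> * complex_of_real (2 * pi *
      (\<Sum>k\<in>UNIV. \<Sum>l\<in>{l. l < k}. \<theta> k l * real_of_int (\<beta> k) * real_of_int (\<gamma> l))))"
    unfolding phase_def by (simp add: mult_ac)
  then show ?thesis by (simp add: norm_exp_i_times)
qed

section \<open>The weight \<open>1 + \<parallel>\<alpha>\<parallel>\<^sup>2\<close>\<close>

definition weight :: "('i::finite \<Rightarrow> int) \<Rightarrow> real" where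
  "weight \<alpha> = 1 + sqn \<alpha>"

lemma sqn_nonneg: "0 \<le> sqn \<alpha>"
  unfolding sqn_def by (intro sum_nonneg) auto

lemma component_square_le_sqn: "(real_of_int (\<alpha> k))^2 \<le> sqn \<alpha>"
  unfolding sqn_def by (rule member_le_sum) auto

lemma weight_ge_1: "1 \<le> weight \<alpha>"
  using sqn_nonneg[of \<alpha>] by (simp add: weight_def)

lemma sqn_le_sqn_add_sqn_diff: "sqn \<alpha> \<le> 2 * sqn \<beta> + 2 * sqn (\<alpha> - \<beta>)"
proof -
  have "(real_of_int (\<alpha> k))^2 \<le>
      2 * (real_of_int (\<beta> k))^2 + 2 * (real_of_int (\<alpha> k) - real_of_int (\<beta> k))^2" for k
  proof -
    have "0 \<le> (2 * real_of_int (\<beta> k) - real_of_int (\<alpha> k))^2" by simp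
    then show ?thesis by (simp add: power2_eq_square algebra_simps)
  qed
  then have "sqn \<alpha> \<le> (\<Sum>k\<in>UNIV. 2 * (real_of_int (\<beta> k))^2 +
      2 * (real_of_int (\<alpha> k) - real_of_int (\<beta> k))^2)"
    unfolding sqn_def by (intro sum_mono) auto
  then show ?thesis
    by (simp add: sqn_def sum.distrib sum_distrib_left fun_diff_def)
qed

lemma weight_peetre: "weight \<alpha> \<le> 2 * weight \<beta> * weight (\<alpha> - \<beta>)"
  using sqn_le_sqn_add_sqn_diff[of \<alpha> \<beta>] mult_nonneg_nonneg[OF sqn_nonneg[of \<beta>] sqn_nonneg[of "\<alpha> - \<beta>"]]
  unfolding weight_def by (simp add: algebra_simps)

definition bracket :: "('i::finite \<Rightarrow> int) \<Rightarrow> real" where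
  "bracket \<alpha> = sqrt (weight \<alpha>)"

lemma bracket_ge_1: "1 \<le> bracket \<alpha>"
  unfolding bracket_def using weight_ge_1[of \<alpha>] by simp

lemma bracket_nonneg [simp]: "0 \<le> bracket \<alpha>"
  using bracket_ge_1[of \<alpha>] by simp

lemma bracket_pow_square: "(bracket \<alpha> ^ q)^2 = weight \<alpha> ^ q"
  unfolding bracket_def using weight_ge_1[of \<alpha>]
  by (simp add: power_mult[symmetric] mult.commute[of q] power_mult)

lemma bracket_le_weight: "bracket \<alpha> \<le> weight \<alpha>"
  unfolding bracket_def using weight_ge_1[of \<alpha>] by (simp add: real_sqrt_le_iff' power2_eq_square)

lemma bracket_pow_peetre: "bracket \<alpha> ^ q \<le> sqrt 2 ^ q * bracket \<beta> ^ q * bracket (\<alpha> - \<beta>) ^ q"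
proof -
  have "bracket \<alpha> \<le> sqrt 2 * bracket \<beta> * bracket (\<alpha> - \<beta>)"
    using weight_peetre[of \<alpha> \<beta>] unfolding bracket_def by (simp add: real_sqrt_mult[symmetric])
  then have "bracket \<alpha> ^ q \<le> (sqrt 2 * bracket \<beta> * bracket (\<alpha> - \<beta>)) ^ q"
    using bracket_ge_1[of \<alpha>] by (intro power_mono) auto
  then show ?thesis by (simp add: power_mult_distrib)
qed

section \<open>Weighted \<open>\<ell>\<^sup>2\<close> spaces\<close>

definition sobolev :: "nat \<Rightarrow> ('i::finite,'m::finite) coeff \<Rightarrow> bool" where
  "sobolev q \<xi> \<longleftrightarrow> (\<lambda>\<alpha>. weight \<alpha> ^ q * (norm (\<xi> \<alpha>))^2) summable_on UNIV"

lemma sobolev_0_iff_ell2: "sobolev 0 \<xi> \<longleftrightarrow> ell2 \<xi>"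
  by (simp add: sobolev_def ell2_def)

lemma sobolev_comparison:
  assumes "sobolev p \<xi>"
    and "\<And>\<alpha>. weight \<alpha> ^ q * (norm (\<eta> \<alpha>))^2 \<le> C * (weight \<alpha> ^ p * (norm (\<xi> \<alpha>))^2)"
  shows "sobolev q \<eta>"
  unfolding sobolev_def
proof (rule summable_on_comparison_test)
  show "(\<lambda>\<alpha>. C * (weight \<alpha> ^ p * (norm (\<xi> \<alpha>))^2)) summable_on UNIV"
    using assms(1) unfolding sobolev_def by (rule summable_on_cmult_right)
  show "0 \<le> weight \<alpha> ^ q * (norm (\<eta> \<alpha>))^2" for \<alpha>
    using weight_ge_1[of \<alpha>] by simp
qed (use assms(2) in auto)

lemma sobolev_mono:
  assumes "sobolev p \<xi>" "q \<le> p"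
  shows "sobolev q \<xi>"
proof (rule sobolev_comparison[OF assms(1), where C = 1])
  fix \<alpha> :: "'a \<Rightarrow> int"
  have "weight \<alpha> ^ q \<le> weight \<alpha> ^ p"
    using weight_ge_1[of \<alpha>] assms(2) by (rule power_increasing[rotated])
  then show "weight \<alpha> ^ q * (norm (\<xi> \<alpha>))^2 \<le> 1 * (weight \<alpha> ^ p * (norm (\<xi> \<alpha>))^2)"
    by (simp add: mult_right_mono)
qed

lemma sobolev_add:
  assumes "sobolev q f" "sobolev q g"
  shows "sobolev q (f + g)"
  unfolding sobolev_def
proof (rule summable_on_comparison_test)
  show "(\<lambda>\<alpha>. 2 * (weight \<alpha> ^ q * (norm (f \<alpha>))^2) + 2 * (weight \<alpha> ^ q * (norm (g \<alpha>))^2))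
      summable_on UNIV"
    using assms unfolding sobolev_def by (intro summable_on_add summable_on_cmult_right)
  fix \<alpha> :: "'a \<Rightarrow> int"
  have "(norm (f \<alpha> + g \<alpha>))^2 \<le> (norm (f \<alpha>) + norm (g \<alpha>))^2"
    by (rule power_mono[OF norm_triangle_ineq]) auto
  also have "\<dots> \<le> 2 * (norm (f \<alpha>))^2 + 2 * (norm (g \<alpha>))^2"
    using sum_squares_bound[of "norm (f \<alpha>)" "norm (g \<alpha>)"] by (simp add: power2_sum)
  finally have "weight \<alpha> ^ q * (norm (f \<alpha> + g \<alpha>))^2 \<le>
      weight \<alpha> ^ q * (2 * (norm (f \<alpha>))^2 + 2 * (norm (g \<alpha>))^2)"
    using weight_ge_1[of \<alpha>] by (intro mult_left_mono) auto
  then show "weight \<alpha> ^ q * (norm ((f + g) \<alpha>))^2 \<le>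
      2 * (weight \<alpha> ^ q * (norm (f \<alpha>))^2) + 2 * (weight \<alpha> ^ q * (norm (g \<alpha>))^2)"
    by (simp add: algebra_simps)
  show "0 \<le> weight \<alpha> ^ q * (norm ((f + g) \<alpha>))^2"
    using weight_ge_1[of \<alpha>] by simp
qed

lemma sobolev_sum:
  assumes "\<And>k. k \<in> S \<Longrightarrow> sobolev q (F k)"
  shows "sobolev q (sum F S)"
  using assms
proof (induction S rule: infinite_finite_induct)
  case (insert k S)
  then show ?case
    unfolding sum.insert[OF insert(1,2)] by (intro sobolev_add) auto
qed (simp_all add: sobolev_def)

lemma sobolev_cmul:
  assumes "sobolev q \<xi>"
  shows "sobolev q (\<lambda>\<alpha>. cmul c (\<xi> \<alpha>))"
  by (rule sobolev_comparison[OF assms, where C = "(norm c)^2"])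
    (simp add: norm_cmul power_mult_distrib)

lemma sobolev_Dk:
  assumes "sobolev (Suc q) \<xi>"
  shows "sobolev q (Dk k \<xi>)"
proof (rule sobolev_comparison[OF assms, where C = 1])
  fix \<alpha> :: "'a \<Rightarrow> int"
  have "(norm (Dk k \<xi> \<alpha>))^2 = (real_of_int (\<alpha> k))^2 * (norm (\<xi> \<alpha>))^2"
    by (simp add: Dk_def norm_cmul norm_mult power_mult_distrib)
  also have "\<dots> \<le> weight \<alpha> * (norm (\<xi> \<alpha>))^2"
    using component_square_le_sqn[of \<alpha> k] by (intro mult_right_mono) (auto simp: weight_def)
  finally show "weight \<alpha> ^ q * (norm (Dk k \<xi> \<alpha>))^2 \<le> 1 * (weight \<alpha> ^ Suc q * (norm (\<xi> \<alpha>))^2)"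
    using weight_ge_1[of \<alpha>] by (simp add: mult_left_mono mult.assoc)
qed

lemma norm_Delta: "norm (Delta \<xi> \<alpha>) = sqn \<alpha> * norm (\<xi> \<alpha>)"
  using sqn_nonneg[of \<alpha>] by (simp add: Delta_def)

lemma sobolev_Delta:
  assumes "sobolev (Suc (Suc q)) \<xi>"
  shows "sobolev q (Delta \<xi>)"
proof (rule sobolev_comparison[OF assms, where C = 1])
  fix \<alpha> :: "'a \<Rightarrow> int"
  have "(norm (Delta \<xi> \<alpha>))^2 \<le> (weight \<alpha>)^2 * (norm (\<xi> \<alpha>))^2"
    unfolding norm_Delta power_mult_distrib using sqn_nonneg[of \<alpha>]
    by (intro mult_right_mono power_mono) (auto simp: weight_def)
  then show "weight \<alpha> ^ q * (norm (Delta \<xi> \<alpha>))^2 \<le> 1 * (weight \<alpha> ^ Suc (Suc q) * (norm (\<xi> \<alpha>))^2)"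
    using weight_ge_1[of \<alpha>] by (simp add: mult_left_mono mult.assoc power2_eq_square)
qed

lemma sobolev_Suc_Suc_if_Delta:
  assumes "sobolev q \<xi>" "sobolev q (Delta \<xi>)"
  shows "sobolev (Suc (Suc q)) \<xi>"
  unfolding sobolev_def
proof (rule summable_on_comparison_test)
  show "(\<lambda>\<alpha>. 2 * (weight \<alpha> ^ q * (norm (\<xi> \<alpha>))^2) + 2 * (weight \<alpha> ^ q * (norm (Delta \<xi> \<alpha>))^2))
      summable_on UNIV"
    using assms unfolding sobolev_def by (intro summable_on_add summable_on_cmult_right)
  fix \<alpha> :: "'a \<Rightarrow> int"
  have "(weight \<alpha>)^2 \<le> 2 + 2 * (sqn \<alpha>)^2"
    using zero_le_power2[of "sqn \<alpha> - 1"] unfolding weight_def power2_eq_square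
    by (simp add: algebra_simps)
  then have "(weight \<alpha>)^2 * (norm (\<xi> \<alpha>))^2 \<le> 2 * (norm (\<xi> \<alpha>))^2 + 2 * (norm (Delta \<xi> \<alpha>))^2"
    unfolding norm_Delta power_mult_distrib
    by (metis (no_types, lifting) distrib_right mult.assoc mult_right_mono zero_le_power2)
  then have "weight \<alpha> ^ q * ((weight \<alpha>)^2 * (norm (\<xi> \<alpha>))^2)
      \<le> weight \<alpha> ^ q * (2 * (norm (\<xi> \<alpha>))^2 + 2 * (norm (Delta \<xi> \<alpha>))^2)"
    using weight_ge_1[of \<alpha>] by (intro mult_left_mono) auto
  then show "weight \<alpha> ^ Suc (Suc q) * (norm (\<xi> \<alpha>))^2 \<le>
      2 * (weight \<alpha> ^ q * (norm (\<xi> \<alpha>))^2) + 2 * (weight \<alpha> ^ q * (norm (Delta \<xi> \<alpha>))^2)"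
    by (simp add: power2_eq_square algebra_simps)
  show "0 \<le> weight \<alpha> ^ Suc (Suc q) * (norm (\<xi> \<alpha>))^2"
    using weight_ge_1[of \<alpha>] by simp
qed

lemma dom_Delta_pow_if_sobolev: "sobolev (2 * m) \<xi> \<Longrightarrow> dom_Delta_pow m \<xi>"
proof (induction m arbitrary: \<xi>)
  case 0
  then show ?case by (simp add: sobolev_0_iff_ell2)
next
  case (Suc m)
  then have "sobolev (Suc (Suc (2 * m))) \<xi>" by simp
  moreover have "sobolev 0 \<xi>" "sobolev 0 (Delta \<xi>)"
    using sobolev_mono[OF calculation] sobolev_Delta[OF sobolev_mono[OF calculation]] by auto
  ultimately show ?case
    using Suc.IH sobolev_Delta by (auto simp: dom_Delta_def sobolev_0_iff_ell2)
qed

lemma summable_on_inverse_one_plus_square_int: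
  "(\<lambda>n::int. 1 / (1 + (real_of_int n)^2)) summable_on UNIV"
proof -
  let ?f = "\<lambda>n::int. 1 / (1 + (real_of_int n)^2)"
  have "summable (\<lambda>n::nat. inverse (real (Suc n) ^ 2))"
    using inverse_power_summable[of 2, where 'a=real] summable_Suc_iff[of "\<lambda>n. inverse (real n ^ 2)"]
    by simp
  then have dominant: "(\<lambda>n::nat. 2 * inverse (real (Suc n) ^ 2)) summable_on UNIV"
    by (subst summable_on_UNIV_nonneg_real_iff) (auto intro: summable_mult)
  have bound: "?f (int n) \<le> 2 * inverse (real (Suc n) ^ 2)" for n
  proof -
    have "(real n + 1)^2 \<le> 2 * (1 + (real n)^2)"
      using zero_le_power2[of "real n - 1"] by (simp add: power2_eq_square algebra_simps)
    moreover have "0 < 1 + (real n)^2" by (intro add_pos_nonneg) auto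
    ultimately show ?thesis by (simp add: field_simps)
  qed
  have "(?f \<circ> int) summable_on UNIV" "(?f \<circ> (\<lambda>n. - int n)) summable_on UNIV"
    using bound by (auto intro!: summable_on_comparison_test[OF dominant])
  then have "?f summable_on range int" "?f summable_on range (\<lambda>n. - int n)"
    by (auto simp: summable_on_reindex inj_on_def)
  then have "?f summable_on (range int \<union> range (\<lambda>n. - int n))"
    by (rule summable_on_union)
  also have "range int \<union> range (\<lambda>n. - int n) = UNIV"
  proof (intro set_eqI iffI UnCI)
    fix x :: int
    assume "x \<notin> range (\<lambda>n. - int n)"
    then have "0 \<le> x"
      using rangeI[of "\<lambda>n. - int n" "nat (- x)"] by (cases "x < 0") auto
    then show "x \<in> range int"
      using rangeI[of int "nat x"] by simp
  qed auto
  finally show ?thesis .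
qed

lemma summable_on_inverse_weight_pow:
  "(\<lambda>\<beta>::'i::finite \<Rightarrow> int. 1 / weight \<beta> ^ CARD('i)) summable_on UNIV"
proof -
  let ?g = "\<lambda>(k::'i) (n::int). 1 / (1 + (real_of_int n)^2)"
  have "Infinite_Set_Sum.abs_summable_on (\<lambda>\<beta>. \<Prod>k\<in>UNIV. ?g k (\<beta> k)) (PiE UNIV (\<lambda>_. UNIV))"
    using summable_on_inverse_one_plus_square_int
    by (intro abs_summable_on_prod_PiE) (auto simp: abs_summable_equivalent[symmetric])
  then have product: "(\<lambda>\<beta>::'i \<Rightarrow> int. norm (\<Prod>k\<in>UNIV. ?g k (\<beta> k))) summable_on UNIV"
    by (simp add: abs_summable_equivalent[symmetric] PiE_UNIV)
  show ?thesis
  proof (rule summable_on_comparison_test[OF product])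
    fix \<beta> :: "'i \<Rightarrow> int"
    have pos: "0 < (\<Prod>k\<in>UNIV. 1 + (real_of_int (\<beta> k))^2)"
      by (intro prod_pos) (auto intro: add_pos_nonneg)
    have "(\<Prod>k\<in>UNIV. 1 + (real_of_int (\<beta> k))^2) \<le> (\<Prod>k\<in>(UNIV::'i set). weight \<beta>)"
      by (intro prod_mono) (auto simp: weight_def intro: component_square_le_sqn)
    then have "1 / weight \<beta> ^ CARD('i) \<le> 1 / (\<Prod>k\<in>UNIV. 1 + (real_of_int (\<beta> k))^2)"
      using pos by (intro divide_left_mono) auto
    then show "1 / weight \<beta> ^ CARD('i) \<le> norm (\<Prod>k\<in>UNIV. ?g k (\<beta> k))"
      by (simp add: abs_of_nonneg prod_nonneg prod_dividef)
    show "0 \<le> 1 / weight \<beta> ^ CARD('i)"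
      using weight_ge_1[of \<beta>] by simp
  qed
qed

lemma smooth_weighted_summable:
  fixes a :: "('i::finite,'m::finite) coeff"
  assumes "smooth a"
  shows "(\<lambda>\<beta>. weight \<beta> ^ q * norm (a \<beta>)) summable_on UNIV"
proof -
  obtain C where C: "\<And>\<alpha>. (1 + sqn \<alpha>)^(q + CARD('i)) * norm (a \<alpha>) \<le> C"
    using assms unfolding smooth_def by blast
  show ?thesis
  proof (rule summable_on_comparison_test)
  show "(\<lambda>\<beta>::'i\<Rightarrow>int. C * (1 / weight \<beta> ^ CARD('i))) summable_on UNIV"
    by (rule summable_on_cmult_right[OF summable_on_inverse_weight_pow])
  fix \<beta> :: "'i \<Rightarrow> int"
  have "weight \<beta> ^ q * norm (a \<beta>) * weight \<beta> ^ CARD('i) \<le> C"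
    using C[of \<beta>] by (simp add: weight_def power_add mult_ac)
  moreover have "0 < weight \<beta> ^ CARD('i)"
    using weight_ge_1[of \<beta>] by simp
  ultimately show "weight \<beta> ^ q * norm (a \<beta>) \<le> C * (1 / weight \<beta> ^ CARD('i))"
    by (simp add: field_simps)
  show "0 \<le> weight \<beta> ^ q * norm (a \<beta>)"
    using weight_ge_1[of \<beta>] by simp
  qed
qed

section \<open>Young's inequality \<open>\<ell>\<^sup>1 * \<ell>\<^sup>2 \<subseteq> \<ell>\<^sup>2\<close>\<close>

lemma square_le_of_quadratic_bound:
  fixes S A D :: real
  assumes "0 \<le> A" and quadratic: "\<And>t. 2 * t * S \<le> t^2 * A + D"
  shows "S^2 \<le> A * D"
proof (cases "A = 0")
  case True
  have "S = 0"
  proof (rule ccontr)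
    assume "S \<noteq> 0"
    then show False
      using quadratic[of "(D + 1) / (2 * S)"] True by simp
  qed
  then show ?thesis
    using quadratic[of 0] True by simp
next
  case False
  with assms(1) have "0 < A" by simp
  moreover have "2 * S^2 / A \<le> S^2 / A + D"
    using quadratic[of "S / A"] \<open>0 < A\<close> by (simp add: power2_eq_square field_simps)
  ultimately show ?thesis
    by (simp add: field_simps)
qed

lemma infsum_mult_square_le:
  fixes a g :: "'a \<Rightarrow> real"
  assumes nonneg: "\<And>y. 0 \<le> a y"
    and summable: "a summable_on UNIV" "(\<lambda>y. a y * g y) summable_on UNIV"
      "(\<lambda>y. a y * (g y)^2) summable_on UNIV"
  shows "(\<Sum>\<^sub>\<infinity>y. a y * g y)^2 \<le> (\<Sum>\<^sub>\<infinity>y. a y) * (\<Sum>\<^sub>\<infinity>y. a y * (g y)^2)"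
proof (rule square_le_of_quadratic_bound)
  show "0 \<le> (\<Sum>\<^sub>\<infinity>y. a y)"
    using nonneg by (rule infsum_nonneg)
  fix t :: real
  have "2 * t * (a y * g y) \<le> t^2 * a y + a y * (g y)^2" for y
    using mult_nonneg_nonneg[OF nonneg[of y] zero_le_power2[of "t - g y"]]
    by (simp add: power2_eq_square algebra_simps)
  then have "(\<Sum>\<^sub>\<infinity>y. 2 * t * (a y * g y)) \<le> (\<Sum>\<^sub>\<infinity>y. t^2 * a y + a y * (g y)^2)"
    using summable by (intro infsum_mono summable_on_cmult_right summable_on_add)
  then show "2 * t * (\<Sum>\<^sub>\<infinity>y. a y * g y) \<le> t^2 * (\<Sum>\<^sub>\<infinity>y. a y) + (\<Sum>\<^sub>\<infinity>y. a y * (g y)^2)"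
    using summable by (simp add: infsum_cmult_right' infsum_add summable_on_cmult_right)
qed

lemma le_sqrt_infsum_square:
  fixes g :: "'a \<Rightarrow> real"
  assumes "(\<lambda>y. (g y)^2) summable_on UNIV"
  shows "g x \<le> sqrt (\<Sum>\<^sub>\<infinity>y. (g y)^2)"
  using finite_sum_le_infsum[OF assms, of "{x}"] by (simp add: real_le_rsqrt)

lemma summable_on_mult_bounded_shift:
  fixes f h :: "'a::ab_group_add \<Rightarrow> real"
  assumes "f summable_on UNIV" "\<And>y. 0 \<le> f y" "\<And>y. 0 \<le> h y" "\<And>y. h y \<le> B"
  shows "(\<lambda>y. f y * h (x - y)) summable_on UNIV"
  using assms
  by (intro summable_on_comparison_test[OF summable_on_cmult_left[OF assms(1), of B]])
    (auto intro: mult_left_mono)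

lemma summable_on_convolution_nonneg:
  fixes a b :: "'a::ab_group_add \<Rightarrow> real"
  assumes "\<And>y. 0 \<le> a y" "\<And>y. 0 \<le> b y" "a summable_on UNIV" "b summable_on UNIV"
  shows "(\<lambda>x. \<Sum>\<^sub>\<infinity>y. a y * b (x - y)) summable_on UNIV"
proof -
  have shift: "bij_betw (\<lambda>x. x - y) UNIV UNIV" for y :: 'a
    by (rule bij_betwI[where g = "\<lambda>x. x + y"]) auto
  have row_summable: "(\<lambda>x. a y * b (x - y)) summable_on UNIV" for y
    using summable_on_reindex_bij_betw[OF shift[of y], of b] assms(4)
    by (intro summable_on_cmult_right) simp
  have row_sum: "(\<Sum>\<^sub>\<infinity>x. a y * b (x - y)) = a y * (\<Sum>\<^sub>\<infinity>x. b x)" for y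
    using infsum_reindex_bij_betw[OF shift[of y], of b] by (simp add: infsum_cmult_right')
  have "(\<lambda>z. norm (case z of (y, x) \<Rightarrow> a y * b (x - y))) summable_on Sigma UNIV (\<lambda>_. UNIV)"
    unfolding Infinite_Sum.abs_summable_on_Sigma_iff
    using assms row_summable by (simp add: abs_mult row_sum summable_on_cmult_left)
  then have "(\<lambda>(x, y). a y * b (x - y)) summable_on UNIV \<times> UNIV"
    using assms(1,2) by (subst summable_on_swap) (simp add: abs_mult case_prod_unfold)
  then show ?thesis
    using summable_on_Sigma_banach[where f = "\<lambda>x y. a y * b (x - y)"] by simp
qed

lemma summable_on_convolution_square:
  fixes a g :: "'a::ab_group_add \<Rightarrow> real"
  assumes a: "\<And>y. 0 \<le> a y" "a summable_on UNIV"
    and g: "\<And>y. 0 \<le> g y" "(\<lambda>y. (g y)^2) summable_on UNIV"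
  shows "(\<lambda>x. (\<Sum>\<^sub>\<infinity>y. a y * g (x - y))^2) summable_on UNIV"
proof (rule summable_on_comparison_test)
  have "(\<lambda>x. \<Sum>\<^sub>\<infinity>y. a y * (g (x - y))^2) summable_on UNIV"
    using a g by (intro summable_on_convolution_nonneg) auto
  then show "(\<lambda>x. (\<Sum>\<^sub>\<infinity>y. a y) * (\<Sum>\<^sub>\<infinity>y. a y * (g (x - y))^2)) summable_on UNIV"
    by (rule summable_on_cmult_right)
  define B where "B = sqrt (\<Sum>\<^sub>\<infinity>y. (g y)^2)"
  have "g y \<le> B" for y
    unfolding B_def using g(2) by (rule le_sqrt_infsum_square)
  then have "(g y)^2 \<le> B^2" for y
    using g(1) by (intro power_mono) auto
  fix x
  have "(\<lambda>y. a y * g (x - y)) summable_on UNIV" "(\<lambda>y. a y * (g (x - y))^2) summable_on UNIV"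
    using a g \<open>\<And>y. g y \<le> B\<close> \<open>\<And>y. (g y)^2 \<le> B^2\<close>
    by (auto intro!: summable_on_mult_bounded_shift)
  then show "(\<Sum>\<^sub>\<infinity>y. a y * g (x - y))^2 \<le> (\<Sum>\<^sub>\<infinity>y. a y) * (\<Sum>\<^sub>\<infinity>y. a y * (g (x - y))^2)"
    using a by (intro infsum_mult_square_le) auto
qed auto

section \<open>Multiplication by smooth elements\<close>

lemma norm_tw_le:
  fixes a \<xi> :: "('i::{finite,linorder},'m::finite) coeff"
  assumes a: "(\<lambda>\<beta>. norm (a \<beta>)) summable_on UNIV" and \<xi>: "\<And>\<gamma>. norm (\<xi> \<gamma>) \<le> B"
  shows "norm (tw \<theta> a \<xi> \<alpha>) \<le> of_nat CARD('m)^3 * (\<Sum>\<^sub>\<infinity>\<beta>. norm (a \<beta>) * norm (\<xi> (\<alpha> - \<beta>)))"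
proof -
  define K :: real where "K = of_nat CARD('m)^3"
  define T where "T \<beta> = cmul (phase \<theta> \<beta> (\<alpha> - \<beta>)) (a \<beta> ** \<xi> (\<alpha> - \<beta>))" for \<beta>
  define b where "b \<beta> = K * (norm (a \<beta>) * norm (\<xi> (\<alpha> - \<beta>)))" for \<beta>
  have T_le: "norm (T \<beta>) \<le> b \<beta>" for \<beta>
    unfolding T_def b_def K_def norm_cmul norm_phase using norm_matrix_mult_le by simp
  have "b summable_on UNIV"
  proof (rule summable_on_comparison_test)
    show "(\<lambda>\<beta>. K * B * norm (a \<beta>)) summable_on UNIV"
      using a by (rule summable_on_cmult_right)
    fix \<beta>
    have "K * (norm (a \<beta>) * norm (\<xi> (\<alpha> - \<beta>))) \<le> K * (norm (a \<beta>) * B)"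
      unfolding K_def using \<xi> by (intro mult_left_mono) auto
    then show "b \<beta> \<le> K * B * norm (a \<beta>)"
      by (simp add: b_def mult_ac)
  qed (simp add: b_def K_def)
  moreover have T_summable: "(\<lambda>\<beta>. norm (T \<beta>)) summable_on UNIV"
    using calculation T_le by (rule Infinite_Sum.abs_summable_on_comparison_test')
  ultimately have "(\<Sum>\<^sub>\<infinity>\<beta>. norm (T \<beta>)) \<le> (\<Sum>\<^sub>\<infinity>\<beta>. b \<beta>)"
    using T_le by (intro infsum_mono)
  then show ?thesis
    using norm_infsum_bound[OF T_summable]
    unfolding tw_def T_def[symmetric] b_def K_def[symmetric] by (simp add: infsum_cmult_right')
qed

lemma smooth_bracket_weighted_summable:
  fixes a :: "('i::finite,'m::finite) coeff"
  assumes "smooth a"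
  shows "(\<lambda>\<beta>. bracket \<beta> ^ q * norm (a \<beta>)) summable_on UNIV"
proof (rule summable_on_comparison_test[OF smooth_weighted_summable[OF assms]])
  fix \<beta> :: "'i \<Rightarrow> int"
  have "bracket \<beta> ^ q \<le> weight \<beta> ^ q"
    using bracket_ge_1[of \<beta>] by (intro power_mono bracket_le_weight) auto
  then show "bracket \<beta> ^ q * norm (a \<beta>) \<le> weight \<beta> ^ q * norm (a \<beta>)"
    by (rule mult_right_mono) simp
  show "0 \<le> bracket \<beta> ^ q * norm (a \<beta>)"
    using bracket_ge_1[of \<beta>] by simp
qed

lemma bracket_pow_mult_norm_tw_le:
  fixes a \<xi> :: "('i::{finite,linorder},'m::finite) coeff"
  assumes a: "smooth a" and \<xi>: "\<And>\<gamma>. bracket \<gamma> ^ q * norm (\<xi> \<gamma>) \<le> B"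
  shows "bracket \<alpha> ^ q * norm (tw \<theta> a \<xi> \<alpha>) \<le> of_nat CARD('m)^3 * sqrt 2 ^ q *
    (\<Sum>\<^sub>\<infinity>\<beta>. (bracket \<beta> ^ q * norm (a \<beta>)) * (bracket (\<alpha> - \<beta>) ^ q * norm (\<xi> (\<alpha> - \<beta>))))"
proof -
  define K :: real where "K = of_nat CARD('m)^3"
  have \<xi>_bound: "norm (\<xi> \<gamma>) \<le> B" for \<gamma>
  proof -
    have "norm (\<xi> \<gamma>) \<le> bracket \<gamma> ^ q * norm (\<xi> \<gamma>)"
      using bracket_ge_1[of \<gamma>] by (simp add: one_le_power mult_le_cancel_right1)
    with \<xi>[of \<gamma>] show ?thesis by linarith
  qed
  have "bracket \<alpha> ^ q * norm (tw \<theta> a \<xi> \<alpha>)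
      \<le> bracket \<alpha> ^ q * (K * (\<Sum>\<^sub>\<infinity>\<beta>. norm (a \<beta>) * norm (\<xi> (\<alpha> - \<beta>))))"
    unfolding K_def using smooth_weighted_summable[OF a, of 0] \<xi>_bound bracket_ge_1[of \<alpha>]
    by (intro mult_left_mono norm_tw_le[where B = B]) auto
  also have "\<dots> = K * (\<Sum>\<^sub>\<infinity>\<beta>. bracket \<alpha> ^ q * (norm (a \<beta>) * norm (\<xi> (\<alpha> - \<beta>))))"
    by (simp add: infsum_cmult_right')
  also have "\<dots> \<le> K * (\<Sum>\<^sub>\<infinity>\<beta>. sqrt 2 ^ q *
      ((bracket \<beta> ^ q * norm (a \<beta>)) * (bracket (\<alpha> - \<beta>) ^ q * norm (\<xi> (\<alpha> - \<beta>)))))"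
  proof (intro mult_left_mono infsum_mono)
    show "(\<lambda>\<beta>. bracket \<alpha> ^ q * (norm (a \<beta>) * norm (\<xi> (\<alpha> - \<beta>)))) summable_on UNIV"
      using smooth_weighted_summable[OF a, of 0] \<xi>_bound
      by (intro summable_on_cmult_right summable_on_mult_bounded_shift) auto
    show "(\<lambda>\<beta>. sqrt 2 ^ q * ((bracket \<beta> ^ q * norm (a \<beta>)) *
        (bracket (\<alpha> - \<beta>) ^ q * norm (\<xi> (\<alpha> - \<beta>))))) summable_on UNIV"
      using smooth_bracket_weighted_summable[OF a] \<xi> bracket_ge_1
      by (intro summable_on_cmult_right summable_on_mult_bounded_shift) auto
    fix \<beta>
    have "bracket \<alpha> ^ q * (norm (a \<beta>) * norm (\<xi> (\<alpha> - \<beta>))) \<le>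
        (sqrt 2 ^ q * bracket \<beta> ^ q * bracket (\<alpha> - \<beta>) ^ q) * (norm (a \<beta>) * norm (\<xi> (\<alpha> - \<beta>)))"
      by (intro mult_right_mono bracket_pow_peetre) auto
    then show "bracket \<alpha> ^ q * (norm (a \<beta>) * norm (\<xi> (\<alpha> - \<beta>))) \<le> sqrt 2 ^ q *
        ((bracket \<beta> ^ q * norm (a \<beta>)) * (bracket (\<alpha> - \<beta>) ^ q * norm (\<xi> (\<alpha> - \<beta>))))"
      by (simp add: mult_ac)
  qed (simp add: K_def)
  finally show ?thesis
    by (simp add: K_def infsum_cmult_right' mult.assoc)
qed

lemma sobolev_tw:
  fixes a \<xi> :: "('i::{finite,linorder},'m::finite) coeff"
  assumes a: "smooth a" and \<xi>: "sobolev q \<xi>"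
  shows "sobolev q (tw \<theta> a \<xi>)"
proof -
  define C :: real where "C = of_nat CARD('m)^3 * sqrt 2 ^ q"
  define A where "A \<beta> = bracket \<beta> ^ q * norm (a \<beta>)" for \<beta>
  define g where "g \<gamma> = bracket \<gamma> ^ q * norm (\<xi> \<gamma>)" for \<gamma>
  have g_square: "(g \<gamma>)^2 = weight \<gamma> ^ q * (norm (\<xi> \<gamma>))^2" for \<gamma>
    unfolding g_def by (simp add: power_mult_distrib bracket_pow_square)
  have g_summable: "(\<lambda>\<gamma>. (g \<gamma>)^2) summable_on UNIV"
    using \<xi> unfolding sobolev_def g_square .
  have pointwise: "weight \<alpha> ^ q * (norm (tw \<theta> a \<xi> \<alpha>))^2 \<le> (C * (\<Sum>\<^sub>\<infinity>\<beta>. A \<beta> * g (\<alpha> - \<beta>)))^2" for \<alpha>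
  proof -
    have "bracket \<alpha> ^ q * norm (tw \<theta> a \<xi> \<alpha>) \<le> C * (\<Sum>\<^sub>\<infinity>\<beta>. A \<beta> * g (\<alpha> - \<beta>))"
      unfolding A_def g_def C_def
      by (rule bracket_pow_mult_norm_tw_le[OF a le_sqrt_infsum_square[OF g_summable[unfolded g_def]]])
    from power_mono[OF this, of 2] show ?thesis
      using bracket_ge_1[of \<alpha>] by (simp add: power_mult_distrib bracket_pow_square)
  qed
  show ?thesis
    unfolding sobolev_def
  proof (rule summable_on_comparison_test[OF _ pointwise])
    have "(\<lambda>\<alpha>. (\<Sum>\<^sub>\<infinity>\<beta>. A \<beta> * g (\<alpha> - \<beta>))^2) summable_on UNIV"
      using smooth_bracket_weighted_summable[OF a] g_summable bracket_ge_1
      unfolding A_def g_def by (intro summable_on_convolution_square) auto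
    then show "(\<lambda>\<alpha>. (C * (\<Sum>\<^sub>\<infinity>\<beta>. A \<beta> * g (\<alpha> - \<beta>)))^2) summable_on UNIV"
      unfolding power_mult_distrib by (rule summable_on_cmult_right)
    show "0 \<le> weight \<alpha> ^ q * (norm (tw \<theta> a \<xi> \<alpha>))^2" for \<alpha>
      using weight_ge_1[of \<alpha>] by simp
  qed
qed

section \<open>Regularity of eigenvectors\<close>

definition first_order_part ::
  "('i::{finite,linorder} \<Rightarrow> 'i \<Rightarrow> real) \<Rightarrow> ('i \<Rightarrow> ('i,'m::finite) coeff) \<Rightarrow> ('i,'m) coeff \<Rightarrow> ('i,'m) coeff"
  where "first_order_part \<theta> h \<xi> = (\<Sum>k\<in>UNIV. Dk k (tw \<theta> (h k) \<xi>) + tw \<theta> (h k) (conn \<theta> h k \<xi>))"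

lemma Delta_eq_Hop_plus_first_order_part:
  fixes \<xi> :: "('i::{finite,linorder},'m::finite) coeff"
  shows "Delta \<xi> = Hop \<theta> h \<xi> + first_order_part \<theta> h \<xi>"
proof
  fix \<alpha> :: "'i \<Rightarrow> int"
  have DkDk: "Dk k (Dk k \<xi>) \<alpha> = cmul (- complex_of_real ((real_of_int (\<alpha> k))^2)) (\<xi> \<alpha>)" for k
  proof -
    have "(\<i> * of_int (\<alpha> k)) * (\<i> * of_int (\<alpha> k)) = - complex_of_real ((real_of_int (\<alpha> k))^2)"
      by (simp add: power2_eq_square algebra_simps)
    then show ?thesis
      by (simp add: Dk_def cmul_cmul)
  qed
  have "(\<Sum>k\<in>UNIV. Dk k (Dk k \<xi>) \<alpha>) = cmul (complex_of_real (- sqn \<alpha>)) (\<xi> \<alpha>)"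
    unfolding DkDk by (simp add: sum_cmul sqn_def sum_negf)
  also have "\<dots> = - Delta \<xi> \<alpha>"
    by (simp add: cmul_uminus cmul_of_real Delta_def)
  finally have "(\<Sum>k\<in>UNIV. Dk k (Dk k \<xi>) \<alpha>) = - Delta \<xi> \<alpha>" .
  moreover have "conn \<theta> h k (conn \<theta> h k \<xi>) \<alpha> =
      Dk k (Dk k \<xi>) \<alpha> + (Dk k (tw \<theta> (h k) \<xi>) + tw \<theta> (h k) (conn \<theta> h k \<xi>)) \<alpha>" for k
    by (simp add: conn_def Dk_def cmul_add)
  ultimately show "Delta \<xi> \<alpha> = (Hop \<theta> h \<xi> + first_order_part \<theta> h \<xi>) \<alpha>"
    by (simp add: Hop_def first_order_part_def sum_fun_apply sum.distrib)
qed

lemma sobolev_first_order_part: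
  assumes "\<And>k. smooth (h k)" "sobolev (Suc q) \<xi>"
  shows "sobolev q (first_order_part \<theta> h \<xi>)"
proof -
  have tw: "sobolev (Suc q) (tw \<theta> (h k) \<xi>)" for k
    using assms by (rule sobolev_tw)
  have "sobolev q (conn \<theta> h k \<xi>)" for k
    unfolding conn_def using sobolev_Dk[OF assms(2)] sobolev_mono[OF tw]
    by (intro sobolev_add) auto
  then show ?thesis
    unfolding first_order_part_def using assms(1)
    by (intro sobolev_sum sobolev_add sobolev_Dk[OF tw] sobolev_tw)
qed

lemma sobolev_Suc_Suc_if_eigenvector:
  assumes "\<And>k. smooth (h k)" "Hop \<theta> h \<xi> = (\<lambda>\<alpha>. cmul lam (\<xi> \<alpha>))" "sobolev (Suc q) \<xi>"
  shows "sobolev (Suc (Suc q)) \<xi>"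
proof (rule sobolev_Suc_Suc_if_Delta)
  show "sobolev q \<xi>"
    using assms(3) by (rule sobolev_mono) simp
  then have "sobolev q (Hop \<theta> h \<xi>)"
    unfolding assms(2) by (rule sobolev_cmul)
  then show "sobolev q (Delta \<xi>)"
    unfolding Delta_eq_Hop_plus_first_order_part[of \<xi> \<theta> h]
    using assms(1,3) by (intro sobolev_add sobolev_first_order_part)
qed

lemma sobolev_if_eigenvector:
  assumes "\<And>k. smooth (h k)" "Hop \<theta> h \<xi> = (\<lambda>\<alpha>. cmul lam (\<xi> \<alpha>))" "dom_Delta \<xi>"
  shows "sobolev q \<xi>"
proof -
  have "sobolev (Suc (Suc 0)) \<xi>"
    using assms(3) by (intro sobolev_Suc_Suc_if_Delta) (simp_all add: dom_Delta_def sobolev_0_iff_ell2)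
  then have "sobolev (Suc p) \<xi>" for p
    using assms(1,2) by (induction p) (auto intro: sobolev_mono sobolev_Suc_Suc_if_eigenvector)
  then show ?thesis
    by (rule sobolev_mono[of "Suc q"]) simp
qed

theorem mainTheorem8:
  fixes \<theta> :: "'i::{finite,linorder} \<Rightarrow> 'i \<Rightarrow> real"
    and h :: "'i \<Rightarrow> ('i,'m::finite) coeff"
    and nabla :: "'i \<Rightarrow> ('i,'m) coeff \<Rightarrow> ('i,'m) coeff"
    and \<xi> :: "('i,'m) coeff"
    and lam :: complex
  assumes "\<forall>k l. \<theta> k l = - \<theta> l k"
    and "\<forall>k. smooth (h k)"
    and "\<forall>k. star \<theta> (h k) = - h k"
    and "compatible_connection \<theta> nabla"
    and "\<forall>k x. smooth x \<longrightarrow> nabla k x = Dk k x + tw \<theta> (h k) x"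
    and "dom_Delta \<xi>"
    and "Hop \<theta> h \<xi> = (\<lambda>\<alpha>. cmul lam (\<xi> \<alpha>))"
  shows "\<forall>m\<ge>1. dom_Delta_pow m \<xi>"
  using sobolev_if_eigenvector[OF _ assms(7,6)] assms(2)
  by (auto intro: dom_Delta_pow_if_sobolev)

end
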